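(* Let $(S,+,\cdot)$ be a left semi-brace. Then the semigroup $(S,+)$ is stationary on the right, i.e. for all $a,b,c,x\in S$, $a+b=a+c$ implies $x+b=x+c$. Consequently $(S,+)$ is a rectangular semigroup, and moreover: (1) the set $E(S)$ of idempotents of $(S,+)$ is a rectangular band; (2) an element $e\in S$ belongs to $E(S)$ if and only if $e$ is a middle unit of $(S,+)$, i.e. $a+e+b=a+b$ for all $a,b\in S$.
   Context: A left semi-brace is a triple $(S,+,\cdot)$ such that $(S,+)$ is a semigroup (not necessarily commutative), $(S,\cdot)$ is a group (with inverse $a^{-1}$ and identity $1$), and $a(b+c)=ab+a(a^{-1}+c)$ for all $a,b,c\in S$. A semigroup $(S,+)$ is rectangular if for all $a,b,x,y\in S$, $a+x=b+x=a+y$ implies $a+x=b+y$. A rectangular band is a rectangular semigroup all of whose elements are idempotent. *)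

theory Defs
  imports Main
begin

definition is_semigroup :: "('a \<Rightarrow> 'a \<Rightarrow> 'a) \<Rightarrow> bool" where
  "is_semigroup add \<longleftrightarrow> (\<forall>a b c. add (add a b) c = add a (add b c))"

definition is_group :: "('a \<Rightarrow> 'a \<Rightarrow> 'a) \<Rightarrow> ('a \<Rightarrow> 'a) \<Rightarrow> 'a \<Rightarrow> bool" where
  "is_group mul ginv one \<longleftrightarrow>
     (\<forall>a b c. mul (mul a b) c = mul a (mul b c)) \<and>
     (\<forall>a. mul one a = a \<and> mul a one = a) \<and>
     (\<forall>a. mul (ginv a) a = one \<and> mul a (ginv a) = one)"

definition left_semi_brace ::
  "('a \<Rightarrow> 'a \<Rightarrow> 'a) \<Rightarrow> ('a \<Rightarrow> 'a \<Rightarrow> 'a) \<Rightarrow> ('a \<Rightarrow> 'a) \<Rightarrow> 'a \<Rightarrow> bool" where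
  "left_semi_brace add mul ginv one \<longleftrightarrow>
     is_semigroup add \<and> is_group mul ginv one \<and>
     (\<forall>a b c. mul a (add b c) = add (mul a b) (mul a (add (ginv a) c)))"

definition stationary_on_right :: "('a \<Rightarrow> 'a \<Rightarrow> 'a) \<Rightarrow> bool" where
  "stationary_on_right add \<longleftrightarrow>
     (\<forall>a b c x. add a b = add a c \<longrightarrow> add x b = add x c)"

definition rectangular_on :: "'a set \<Rightarrow> ('a \<Rightarrow> 'a \<Rightarrow> 'a) \<Rightarrow> bool" where
  "rectangular_on T add \<longleftrightarrow>
     (\<forall>a\<in>T. \<forall>b\<in>T. \<forall>x\<in>T. \<forall>y\<in>T.
        add a x = add b x \<and> add b x = add a y \<longrightarrow> add a x = add b y)"

definition rectangular_semigroup :: "('a \<Rightarrow> 'a \<Rightarrow> 'a) \<Rightarrow> bool" where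
  "rectangular_semigroup add \<longleftrightarrow> is_semigroup add \<and> rectangular_on UNIV add"

definition idempotents :: "('a \<Rightarrow> 'a \<Rightarrow> 'a) \<Rightarrow> 'a set" where
  "idempotents add = {e. add e e = e}"

definition rectangular_band_on :: "'a set \<Rightarrow> ('a \<Rightarrow> 'a \<Rightarrow> 'a) \<Rightarrow> bool" where
  "rectangular_band_on T add \<longleftrightarrow>
     (\<forall>a\<in>T. \<forall>b\<in>T. add a b \<in> T) \<and>
     (\<forall>a\<in>T. \<forall>b\<in>T. \<forall>c\<in>T. add (add a b) c = add a (add b c)) \<and>
     rectangular_on T add \<and> (\<forall>a\<in>T. add a a = a)"

definition middle_unit :: "('a \<Rightarrow> 'a \<Rightarrow> 'a) \<Rightarrow> 'a \<Rightarrow> bool" where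
  "middle_unit add e \<longleftrightarrow> (\<forall>a b. add (add a e) b = add a b)"

end

theory Submission
  imports Defs
begin

text \<open>Left multiplication by \<open>a\<inverse>\<close> expresses \<open>x + b\<close> through \<open>a + b\<close>:
  \<open>a\<inverse>(x + b) = a\<inverse>x + a\<inverse>(a + b)\<close>; hence \<open>a + b = a + c\<close> forces \<open>x + b = x + c\<close>. The multiplicative identity \<open>1\<close> is a middle
  unit, and stationarity transports \<open>e + (e + y) = e + (1 + y)\<close> to \<open>x + (e + y) = x + y\<close>,
  so idempotents are middle units. Conversely \<open>1 + 1 = 1\<close>, so every middle unit \<open>e\<close> satisfies
  \<open>e = e(1 + 1) = e + t\<close> for some \<open>t\<close>, whence \<open>e + e = e + e + t = e + t = e\<close>.\<close>

lemma stationary_on_right_imp_rectangular_on: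
  assumes "stationary_on_right add"
  shows "rectangular_on T add"
  using assms unfolding stationary_on_right_def rectangular_on_def by metis

lemma idempotent_imp_middle_unit:
  assumes "is_semigroup add" and "stationary_on_right add" and "middle_unit add u"
    and "add e e = e"
  shows "middle_unit add e"
  unfolding middle_unit_def
proof (intro allI)
  fix x y
  have "add e (add e y) = add e (add u y)"
    using assms unfolding is_semigroup_def middle_unit_def by metis
  then have "add x (add e y) = add x (add u y)"
    using \<open>stationary_on_right add\<close> unfolding stationary_on_right_def by blast
  then show "add (add x e) y = add x y"
    using assms unfolding is_semigroup_def middle_unit_def by metis
qed

lemma middle_unit_imp_idempotent:
  assumes "is_semigroup add" and "middle_unit add e" and "add e t = e"
  shows "add e e = e"
proof -
  have "add e e = add (add e e) t"
    using assms(1,3) unfolding is_semigroup_def by metis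
  also have "\<dots> = e"
    using assms(2,3) unfolding middle_unit_def by simp
  finally show ?thesis .
qed

lemma rectangular_band_on_idempotents:
  assumes "is_semigroup add" and "stationary_on_right add"
    and "\<And>e. e \<in> idempotents add \<Longrightarrow> middle_unit add e"
  shows "rectangular_band_on (idempotents add) add"
proof -
  have assoc: "add (add a b) c = add a (add b c)" for a b c
    using assms(1) unfolding is_semigroup_def by blast
  have closed: "add e f \<in> idempotents add"
    if "e \<in> idempotents add" and "f \<in> idempotents add" for e f
  proof -
    have "add (add e f) (add e f) = add (add (add e f) e) f"
      by (simp add: assoc)
    also have "\<dots> = add (add e f) f"
      using assms(3)[OF that(1)] unfolding middle_unit_def by simp
    also have "\<dots> = add e f"
      using that(2) by (simp add: assoc idempotents_def)
    finally show ?thesis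
      unfolding idempotents_def by simp
  qed
  show ?thesis
    unfolding rectangular_band_on_def
    using closed assoc stationary_on_right_imp_rectangular_on[OF assms(2)]
    by (simp add: idempotents_def)
qed

locale semi_brace =
  fixes add :: "'a \<Rightarrow> 'a \<Rightarrow> 'a" (infixl "\<oplus>" 65)
    and mul :: "'a \<Rightarrow> 'a \<Rightarrow> 'a" (infixl "\<cdot>" 70)
    and ginv :: "'a \<Rightarrow> 'a"
    and one :: 'a
  assumes add_assoc: "a \<oplus> b \<oplus> c = a \<oplus> (b \<oplus> c)"
    and mul_assoc: "a \<cdot> b \<cdot> c = a \<cdot> (b \<cdot> c)"
    and mul_one_left: "one \<cdot> a = a"
    and mul_one_right: "a \<cdot> one = a"
    and ginv_mul: "ginv a \<cdot> a = one"
    and mul_ginv: "a \<cdot> ginv a = one"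
    and brace: "a \<cdot> (b \<oplus> c) = a \<cdot> b \<oplus> a \<cdot> (ginv a \<oplus> c)"

lemma semi_brace_if_left_semi_brace:
  assumes "left_semi_brace add mul ginv one"
  shows "semi_brace add mul ginv one"
  using assms unfolding left_semi_brace_def is_semigroup_def is_group_def
  by unfold_locales blast+

context semi_brace
begin

lemma is_semigroup_add: "is_semigroup (\<oplus>)"
  unfolding is_semigroup_def by (simp add: add_assoc)

lemma ginv_ginv: "ginv (ginv a) = a"
  by (metis mul_assoc mul_one_left mul_one_right ginv_mul)

lemma ginv_one: "ginv one = one"
  by (metis mul_one_right ginv_mul)

lemma mul_left_cancel: "g \<cdot> u = g \<cdot> v \<Longrightarrow> u = v"
  by (metis mul_assoc mul_one_left ginv_mul)

lemma mul_ginv_add: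
  "ginv a \<cdot> (x \<oplus> b) = ginv a \<cdot> x \<oplus> ginv a \<cdot> (a \<oplus> b)"
  using brace[of "ginv a" x b] by (simp add: ginv_ginv)

lemma stationary_on_right_add: "stationary_on_right (\<oplus>)"
  unfolding stationary_on_right_def
  by (metis mul_ginv_add mul_left_cancel)

lemma middle_unit_one: "middle_unit (\<oplus>) one"
  unfolding middle_unit_def
  using brace[of one] by (simp add: ginv_one mul_one_left add_assoc)

lemma one_add_mul_ginv_add: "one \<oplus> ginv g \<cdot> (g \<oplus> c) = ginv g \<cdot> (g \<oplus> c)"
  using brace[of "ginv g" g c] by (simp add: ginv_mul ginv_ginv)

lemma one_add_one: "one \<oplus> one = one"
proof -
  have "one \<oplus> one \<oplus> one = one \<oplus> one"
    using middle_unit_one unfolding middle_unit_def by blast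
  then show ?thesis
    using one_add_mul_ginv_add[of "one \<oplus> one" one] by (simp add: ginv_mul)
qed

lemma eq_add_mul_ginv_add_one: "e = e \<oplus> e \<cdot> (ginv e \<oplus> one)"
  using brace[of e one one] by (simp add: one_add_one mul_one_right)

lemma idempotents_eq_middle_units:
  "e \<in> idempotents (\<oplus>) \<longleftrightarrow> middle_unit (\<oplus>) e"
proof
  assume "e \<in> idempotents (\<oplus>)"
  then show "middle_unit (\<oplus>) e"
    using idempotent_imp_middle_unit[OF is_semigroup_add stationary_on_right_add middle_unit_one]
    by (simp add: idempotents_def)
next
  assume "middle_unit (\<oplus>) e"
  then show "e \<in> idempotents (\<oplus>)"
    using middle_unit_imp_idempotent[OF is_semigroup_add _ eq_add_mul_ginv_add_one[symmetric]]
    by (simp add: idempotents_def)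
qed

end

theorem proposition9:
  fixes add mul :: "'a \<Rightarrow> 'a \<Rightarrow> 'a" and ginv :: "'a \<Rightarrow> 'a" and one :: 'a
  assumes "left_semi_brace add mul ginv one"
  shows "stationary_on_right add
       \<and> rectangular_semigroup add
       \<and> rectangular_band_on (idempotents add) add
       \<and> (\<forall>e. e \<in> idempotents add \<longleftrightarrow> middle_unit add e)"
proof -
  interpret semi_brace add mul ginv one
    using semi_brace_if_left_semi_brace[OF assms] .
  show ?thesis
    using stationary_on_right_add is_semigroup_add idempotents_eq_middle_units
      stationary_on_right_imp_rectangular_on
      rectangular_band_on_idempotents[OF is_semigroup_add stationary_on_right_add]
    unfolding rectangular_semigroup_def by blast
qed

end
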